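(* For all integers $v\geq 1$ and $L\geq 0$, \[ \sum_{n_1,\ldots,n_v\geq 0} \frac{q^{\sum_{i=1}^v N_i(N_i+1)+n_v}}{(q)_{n_1}\cdots(q)_{n_{v-1}}(q)_{1+2n_v}}\,\frac{(-1;q^3)_{n_v}}{(-1;q)_{n_v}}\,\frac{(q)_{2L+1}}{(q)_{L-N_1}}\,(1+q-q^{1+n_v}) =\sum_{j=-\infty}^{\infty}\left(\frac{j}{3}\right) q^{\frac{(2v+1)j^2-(2v+3)j}{2}+1} {2L+1 \brack L+j}_q, \] where $N_i=n_i+n_{i+1}+\cdots+n_v$ for $i=1,\ldots,v$ (for $v=1$ the product $(q)_{n_1}\cdots(q)_{n_{v-1}}$ is empty).
   Context: For a variable $a$ and integer $n\ge 0$, $(a;q)_n=(1-a)(1-aq)\cdots(1-aq^{n-1})$, and $(q)_n=(q;q)_n$; by convention $1/(q)_n=0$ for negative integers $n$. The $q$-binomial coefficient is ${A \brack B}_q=\frac{(q;q)_A}{(q;q)_B(q;q)_{A-B}}$ if $0\le B\le A$ are integers, and $0$ otherwise. $\left(\frac{j}{3}\right)$ is the Legendre symbol modulo 3: it equals $1$ if $j\equiv 1 \pmod 3$, $-1$ if $j\equiv -1\pmod 3$, and $0$ if $3\mid j$. *)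

theory Defs
  imports "HOL-Analysis.Analysis" "HOL-Number_Theory.Number_Theory"
begin

definition qpoch :: "complex \<Rightarrow> complex \<Rightarrow> nat \<Rightarrow> complex" where
  "qpoch a q n = (\<Prod>k<n. (1 - a * q ^ k))"

definition qfact :: "complex \<Rightarrow> nat \<Rightarrow> complex" where
  "qfact q n = qpoch q q n"

definition inv_qfact :: "complex \<Rightarrow> int \<Rightarrow> complex" where
  "inv_qfact q m = (if m < 0 then 0 else 1 / qfact q (nat m))"

definition qbinom :: "complex \<Rightarrow> int \<Rightarrow> int \<Rightarrow> complex" where
  "qbinom q A B = (if 0 \<le> B \<and> B \<le> A
      then qfact q (nat A) / (qfact q (nat B) * qfact q (nat (A - B))) else 0)"

end

(*
  Pairing the terms j = r + 1 and j = -r of the right-hand side exhibits it as (q)_{2L+1} times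
  beta^(v)_L, where (alpha^(v), beta^(v)) is the Bailey pair relative to a = q obtained from a seed
  pair (alpha, beta) by v applications of Bailey's lemma; then alpha^(v)_r = q^{v r(r+1)} alpha_r.

  The seed beta_K = q^K (1 + q - q^{K+1}) (-1;q^3)_K / ((-1;q)_K (q)_{2K+1}) comes from the sums
  S_t(m) = sum_j chi(j + t) q^{j(j-1)/2} [2m; m+j], chi the Legendre symbol mod 3: the two q-Pascal
  rules give a recurrence in m that closes up because chi has period 3, and its solution is
  (-1;q^3)_m / (-1;q)_m times a factor that depends on t only through t mod 3.

  Each Bailey step beta'_M = sum_K q^{K(K+1)} beta_K / (q)_{M-K} introduces one summation variable;
  unwinding the v steps that produce beta^(v)_L gives the multisum on the left, with N_1, ..., N_v
  the successive values of M and n_i = N_i - N_{i+1}.  Bailey's lemma itself reduces to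
  sum_k q^{k(k+c)} [n;k] / (q)_{k+c} = 1 / (q)_{n+c}, which follows from q-Pascal by induction on n.
*)

theory Submission
  imports Defs
begin

section \<open>q-factorials and q-binomial coefficients\<close>

lemma norm_power_less_one:
  fixes q :: complex
  assumes "norm q < 1" and "n > 0"
  shows "norm (q ^ n) < 1"
  using assms by (simp add: norm_power power_less_one_iff)

lemma qfact_0 [simp]: "qfact q 0 = 1"
  by (simp add: qfact_def qpoch_def)

lemma qfact_Suc: "qfact q (Suc n) = qfact q n * (1 - q ^ Suc n)"
  by (simp add: qfact_def qpoch_def)

lemma qfact_nonzero:
  assumes "norm q < 1"
  shows "qfact q n \<noteq> 0"
proof (induction n)
  case (Suc n)
  have "q ^ Suc n \<noteq> 1"
    using norm_power_less_one[OF assms, of "Suc n"] by auto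
  with Suc show ?case by (simp add: qfact_Suc)
qed simp

lemma qpoch_minus_one_nonzero:
  fixes q :: complex
  assumes "norm q < 1"
  shows "qpoch (-1) q m \<noteq> 0"
proof -
  have "1 + q ^ k \<noteq> 0" for k
  proof (cases k)
    case (Suc n)
    then have "q ^ k \<noteq> -1"
      using norm_power_less_one[OF assms, of k] by auto
    then show ?thesis
      by (metis add_eq_0_iff)
  qed simp
  then show ?thesis
    by (simp add: qpoch_def)
qed

lemma qbinom_eq_0: "B < 0 \<or> A < B \<Longrightarrow> qbinom q A B = 0"
  by (auto simp: qbinom_def)

lemma qbinom_nonzero_imp_bounds: "qbinom q A B \<noteq> 0 \<Longrightarrow> 0 \<le> B \<and> B \<le> A"
  by (auto simp: qbinom_def split: if_splits)

lemma finite_qbinom_support: "finite {j. f j * qbinom q A (c + j) \<noteq> 0}"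
  by (rule finite_subset[of _ "{- c..A - c}"]) (auto dest: qbinom_nonzero_imp_bounds)

lemma qbinom_of_nat:
  "k \<le> n \<Longrightarrow> qbinom q (int n) (int k) = qfact q n / (qfact q k * qfact q (n - k))"
  by (simp add: qbinom_def nat_diff_distrib)

lemma qbinom_symmetric: "qbinom q A B = qbinom q A (A - B)"
  by (auto simp: qbinom_def mult.commute)

lemma qbinom_central:
  assumes "r \<le> K"
  shows "qbinom q (2 * int K + 1) (int K + int r + 1) = qfact q (2 * K + 1) / (qfact q (K - r) * qfact q (K + r + 1))"
    and "qbinom q (2 * int K + 1) (int K - int r) = qfact q (2 * K + 1) / (qfact q (K - r) * qfact q (K + r + 1))"
proof -
  have "qbinom q (int (2 * K + 1)) (int (K + r + 1)) = qfact q (2 * K + 1) / (qfact q (K + r + 1) * qfact q (K - r))"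
    using assms by (subst qbinom_of_nat) (simp_all add: Suc_diff_le)
  then show *: "qbinom q (2 * int K + 1) (int K + int r + 1) = qfact q (2 * K + 1) / (qfact q (K - r) * qfact q (K + r + 1))"
    by (simp add: ac_simps)
  show "qbinom q (2 * int K + 1) (int K - int r) = qfact q (2 * K + 1) / (qfact q (K - r) * qfact q (K + r + 1))"
    using qbinom_symmetric[of q "2 * int K + 1" "int K - int r"] * by (simp add: add_ac)
qed

lemma qbinom_pascal_nat:
  assumes "norm q < 1"
  shows "qfact q (a + b + 2) / (qfact q (a + 1) * qfact q (b + 1))
       = qfact q (a + b + 1) / (qfact q a * qfact q (b + 1))
       + q ^ (a + 1) * (qfact q (a + b + 1) / (qfact q (a + 1) * qfact q b))"
proof -
  define x y where "x = 1 - q ^ (a + 1)" and "y = 1 - q ^ (b + 1)"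
  have split: "qfact q (a + b + 2) = qfact q (a + b + 1) * (1 - (1 - x) * (1 - y))"
    "qfact q (a + 1) = qfact q a * x" "qfact q (b + 1) = qfact q b * y"
    using qfact_Suc[of q "a + b + 1"] qfact_Suc[of q a] qfact_Suc[of q b]
    by (simp_all add: x_def y_def power_add mult_ac)
  have "x \<noteq> 0" "y \<noteq> 0" "qfact q a \<noteq> 0" "qfact q b \<noteq> 0"
    using qfact_nonzero[OF assms] by (metis split(2,3) mult_zero_right)+
  then show ?thesis
    unfolding split by (simp add: field_simps) (simp add: x_def algebra_simps)
qed

lemma qbinom_pascal:
  assumes "norm q < 1" and "0 \<le> N"
  shows "qbinom q (N + 1) k = qbinom q N (k - 1) + q ^ nat k * qbinom q N k"
proof -
  consider "k < 0" | "k = 0" | "1 \<le> k \<and> k \<le> N" | "k = N + 1" | "N + 1 < k"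
    by linarith
  then show ?thesis
  proof cases
    case 3
    define a b where "a = nat (k - 1)" and "b = nat (N - k)"
    have k: "k = int a + 1" and N: "N = int a + int b + 1"
      using 3 by (simp_all add: a_def b_def)
    then have nat_k: "nat k = a + 1"
      by simp
    have "qbinom q (N + 1) k = qfact q (a + b + 2) / (qfact q (a + 1) * qfact q (b + 1))"
      using qbinom_of_nat[of "a + 1" "a + b + 2" q] by (simp add: k N ac_simps)
    moreover have "qbinom q N (k - 1) = qfact q (a + b + 1) / (qfact q a * qfact q (b + 1))"
      using qbinom_of_nat[of a "a + b + 1" q] by (simp add: k N ac_simps)
    moreover have "qbinom q N k = qfact q (a + b + 1) / (qfact q (a + 1) * qfact q b)"
      using qbinom_of_nat[of "a + 1" "a + b + 1" q] by (simp add: k N ac_simps)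
    ultimately show ?thesis
      using qbinom_pascal_nat[OF assms(1), of a b] by (simp add: nat_k)
  qed (use assms in \<open>auto simp: qbinom_def qfact_nonzero\<close>)
qed

lemma qbinom_pascal':
  assumes "norm q < 1" and "0 \<le> N"
  shows "qbinom q (N + 1) k = qbinom q N k + q ^ nat (N + 1 - k) * qbinom q N (k - 1)"
proof -
  have "qbinom q (N + 1) k = qbinom q (N + 1) (N + 1 - k)"
    by (rule qbinom_symmetric)
  also have "\<dots> = qbinom q N (N - k) + q ^ nat (N + 1 - k) * qbinom q N (N + 1 - k)"
    using qbinom_pascal[OF assms, of "N + 1 - k"] by simp
  also have "qbinom q N (N - k) = qbinom q N k"
    by (rule qbinom_symmetric[symmetric])
  also have "qbinom q N (N + 1 - k) = qbinom q N (k - 1)"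
    using qbinom_symmetric[of q N "k - 1"] by (simp add: algebra_simps)
  finally show ?thesis .
qed

lemma qbinom_pascal_of_nat:
  assumes "norm q < 1"
  shows "qbinom q (int (Suc n)) (int k) = qbinom q (int n) (int k) + q ^ (Suc n - k) * qbinom q (int n) (int k - 1)"
proof -
  have "nat (int n + 1 - int k) = Suc n - k"
    by arith
  then have "qbinom q (int n + 1) (int k) = qbinom q (int n) (int k) + q ^ (Suc n - k) * qbinom q (int n) (int k - 1)"
    using qbinom_pascal'[OF assms, of "int n" "int k"] by simp
  then show ?thesis
    by (metis add.commute of_nat_Suc)
qed

definition qpower_sum :: "complex \<Rightarrow> nat \<Rightarrow> nat \<Rightarrow> complex" where
  "qpower_sum q n c = (\<Sum>k\<le>n. q ^ (k * (k + c)) * qbinom q (int n) (int k) / qfact q (k + c))"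

lemma qpower_sum_Suc:
  assumes "norm q < 1"
  shows "qpower_sum q (Suc n) c = qpower_sum q n c + q ^ (Suc n + c) * qpower_sum q n (Suc c)"
proof -
  have "qpower_sum q (Suc n) c
      = (\<Sum>k\<le>Suc n. q ^ (k * (k + c)) * qbinom q (int n) (int k) / qfact q (k + c))
      + (\<Sum>k\<le>Suc n. q ^ (k * (k + c)) * (q ^ (Suc n - k) * qbinom q (int n) (int k - 1)) / qfact q (k + c))"
    unfolding qpower_sum_def qbinom_pascal_of_nat[OF assms] distrib_left add_divide_distrib by (rule sum.distrib)
  also have "(\<Sum>k\<le>Suc n. q ^ (k * (k + c)) * qbinom q (int n) (int k) / qfact q (k + c)) = qpower_sum q n c"
    by (simp add: qpower_sum_def qbinom_eq_0)
  also have "(\<Sum>k\<le>Suc n. q ^ (k * (k + c)) * (q ^ (Suc n - k) * qbinom q (int n) (int k - 1)) / qfact q (k + c))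
      = (\<Sum>k\<le>n. q ^ (Suc k * (Suc k + c)) * q ^ (Suc n - Suc k) * qbinom q (int n) (int k) / qfact q (Suc k + c))"
    by (subst sum.atMost_Suc_shift) (simp add: qbinom_eq_0 mult.assoc)
  also have "\<dots> = q ^ (Suc n + c) * qpower_sum q n (Suc c)"
    unfolding qpower_sum_def sum_distrib_left
  proof (rule sum.cong[OF refl])
    fix k
    assume "k \<in> {..n}"
    then have "Suc k * (Suc k + c) + (Suc n - Suc k) = Suc n + c + k * (k + Suc c)"
      by (simp add: algebra_simps)
    then have powers: "q ^ (Suc k * (Suc k + c)) * q ^ (Suc n - Suc k) = q ^ (Suc n + c) * q ^ (k * (k + Suc c))"
      by (simp only: power_add[symmetric])
    show "q ^ (Suc k * (Suc k + c)) * q ^ (Suc n - Suc k) * qbinom q (int n) (int k) / qfact q (Suc k + c)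
        = q ^ (Suc n + c) * (q ^ (k * (k + Suc c)) * qbinom q (int n) (int k) / qfact q (k + Suc c))"
      unfolding powers by simp
  qed
  finally show ?thesis .
qed

lemma qpower_sum_eq:
  assumes "norm q < 1"
  shows "qpower_sum q n c = 1 / qfact q (n + c)"
proof (induction n arbitrary: c)
  case 0
  show ?case
    using qfact_nonzero[OF assms] by (simp add: qpower_sum_def qbinom_def)
next
  case (Suc n)
  have "qfact q (Suc n + c) = qfact q (n + c) * (1 - q ^ (Suc n + c))"
    using qfact_Suc[of q "n + c"] by simp
  then show ?case
    using qfact_nonzero[OF assms, of "n + c"] qfact_nonzero[OF assms, of "Suc n + c"]
    by (simp add: qpower_sum_Suc[OF assms] Suc.IH field_simps)
qed

lemma sum_power_div_three_qfacts:
  assumes "norm q < 1"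
  shows "(\<Sum>k\<le>n. q ^ (k * (k + c)) / (qfact q k * qfact q (n - k) * qfact q (k + c)))
       = 1 / (qfact q n * qfact q (n + c))"
proof -
  have "qfact q n * (\<Sum>k\<le>n. q ^ (k * (k + c)) / (qfact q k * qfact q (n - k) * qfact q (k + c)))
      = qpower_sum q n c"
    by (auto simp: qpower_sum_def sum_distrib_left qbinom_of_nat qfact_nonzero[OF assms] field_simps
        intro!: sum.cong)
  then show ?thesis
    using qpower_sum_eq[OF assms, of n c] qfact_nonzero[OF assms, of n] qfact_nonzero[OF assms, of "n + c"]
    by (simp add: field_simps)
qed

section \<open>Sums over the integers against the Legendre symbol mod 3\<close>

definition chi3 :: "int \<Rightarrow> complex" where
  "chi3 j = of_int (Legendre j 3)"

lemma QuadRes_3_iff: "QuadRes 3 a \<longleftrightarrow> a mod 3 \<noteq> 2"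
proof
  assume "QuadRes 3 a"
  then obtain y where "y\<^sup>2 mod 3 = a mod 3"
    by (auto simp: QuadRes_def cong_def)
  moreover have "y\<^sup>2 mod 3 = (y mod 3)\<^sup>2 mod 3"
    by (simp add: power_mod)
  moreover have "y mod 3 \<in> {0, 1, 2}"
    by auto
  ultimately show "a mod 3 \<noteq> 2"
    by (auto simp: power2_eq_square)
next
  assume "a mod 3 \<noteq> 2"
  then have "[0\<^sup>2 = a] (mod 3) \<or> [1\<^sup>2 = a] (mod 3)"
    by (auto simp: cong_def)
  then show "QuadRes 3 a"
    unfolding QuadRes_def by blast
qed

lemma chi3_eq: "chi3 j = (if j mod 3 = 0 then 0 else if j mod 3 = 1 then 1 else -1)"
proof -
  have "j mod 3 \<in> {0, 1, 2}"
    by auto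
  then show ?thesis
    by (auto simp: chi3_def Legendre_def QuadRes_3_iff cong_def)
qed

definition tri :: "int \<Rightarrow> nat" where
  "tri j = nat (j * (j - 1) div 2)"

lemma of_nat_tri: "int (tri j) = j * (j - 1) div 2"
proof -
  have "0 \<le> j * (j - 1)"
    by (cases "j \<ge> 1") (auto simp: zero_le_mult_iff)
  then show ?thesis
    by (simp add: tri_def)
qed

lemma of_nat_tri_plus_one: "int (tri (j + 1)) = int (tri j) + j"
proof -
  have "(j + 1) * (j + 1 - 1) = j * (j - 1) + 2 * j"
    by (simp add: algebra_simps)
  then show ?thesis
    unfolding of_nat_tri by simp
qed

lemma infsum_add_shifted:
  fixes g h :: "int \<Rightarrow> 'a::{topological_comm_monoid_add, t2_space, topological_semigroup_mult, division_ring}"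
  assumes "finite {j. g j \<noteq> 0}" and "finite {j. h j \<noteq> 0}"
  shows "(\<Sum>\<^sub>\<infinity>j. g j + c * h (j + d)) = (\<Sum>\<^sub>\<infinity>j. g j) + c * (\<Sum>\<^sub>\<infinity>j. h j)"
proof -
  have "{j. h (j + d) \<noteq> 0} = (\<lambda>j. j - d) ` {j. h j \<noteq> 0}"
    by (force simp: image_iff)
  then have "(\<lambda>j. h (j + d)) summable_on UNIV"
    using assms(2) by (intro finite_nonzero_values_imp_summable_on) simp
  moreover have "g summable_on UNIV"
    using assms(1) by (intro finite_nonzero_values_imp_summable_on) simp
  moreover have "(\<Sum>\<^sub>\<infinity>j. h (j + d)) = (\<Sum>\<^sub>\<infinity>j. h j)"
    by (rule infsum_reindex_bij_witness[of UNIV "\<lambda>j. j - d" "\<lambda>j. j + d"]) auto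
  ultimately show ?thesis
    by (simp add: infsum_add summable_on_cmult_right infsum_cmult_right')
qed

lemma infsum_int_fold:
  fixes f :: "int \<Rightarrow> 'a::{topological_comm_monoid_add, t2_space}"
  assumes "\<And>j. j < - int K \<or> int K + 1 < j \<Longrightarrow> f j = 0"
  shows "(\<Sum>\<^sub>\<infinity>j. f j) = (\<Sum>r\<le>K. f (int r + 1) + f (- int r))"
proof -
  have "(\<Sum>\<^sub>\<infinity>j. f j) = (\<Sum>j\<in>{- int K..0} \<union> {1..int K + 1}. f j)"
    by (subst infsum_finite[symmetric], simp, rule infsum_cong_neutral) (use assms in auto)
  also have "\<dots> = (\<Sum>j\<in>{1..int K + 1}. f j) + (\<Sum>j\<in>{- int K..0}. f j)"
    by (subst sum.union_disjoint) (auto simp: add.commute)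
  also have "(\<Sum>j\<in>{1..int K + 1}. f j) = (\<Sum>r\<le>K. f (int r + 1))"
    by (rule sum.reindex_bij_witness[of _ "\<lambda>r. int r + 1" "\<lambda>j. nat (j - 1)"]) auto
  also have "(\<Sum>j\<in>{- int K..0}. f j) = (\<Sum>r\<le>K. f (- int r))"
    by (rule sum.reindex_bij_witness[of _ "\<lambda>r. - int r" "\<lambda>j. nat (- j)"]) auto
  finally show ?thesis
    by (simp add: sum.distrib)
qed

lemma infsum_qbinom_fold:
  fixes G :: "int \<Rightarrow> complex"
  shows "(\<Sum>\<^sub>\<infinity>j. G j * qbinom q (2 * int K + 1) (int K + j))
       = qfact q (2 * K + 1) * (\<Sum>r\<le>K. (G (int r + 1) + G (- int r)) / (qfact q (K - r) * qfact q (K + r + 1)))"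
proof -
  have "(\<Sum>\<^sub>\<infinity>j. G j * qbinom q (2 * int K + 1) (int K + j))
      = (\<Sum>r\<le>K. G (int r + 1) * qbinom q (2 * int K + 1) (int K + int r + 1)
                + G (- int r) * qbinom q (2 * int K + 1) (int K - int r))"
    by (subst infsum_int_fold[of K]) (auto simp: qbinom_eq_0 add_ac)
  also have "\<dots> = (\<Sum>r\<le>K. (G (int r + 1) + G (- int r)) * (qfact q (2 * K + 1) / (qfact q (K - r) * qfact q (K + r + 1))))"
    by (rule sum.cong) (simp_all add: qbinom_central ring_distribs add_divide_distrib)
  also have "\<dots> = qfact q (2 * K + 1) * (\<Sum>r\<le>K. (G (int r + 1) + G (- int r)) / (qfact q (K - r) * qfact q (K + r + 1)))"
    by (simp add: sum_distrib_left mult.commute)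
  finally show ?thesis .
qed

definition chi_sum :: "complex \<Rightarrow> int \<Rightarrow> nat \<Rightarrow> nat \<Rightarrow> complex" where
  "chi_sum q t A c = (\<Sum>\<^sub>\<infinity>j. chi3 (j + t) * q ^ tri j * qbinom q (int A) (int c + j))"

lemma chi_sum_pascal:
  assumes "norm q < 1"
  shows "chi_sum q t (Suc A) (Suc c) = chi_sum q t A c + q ^ Suc c * chi_sum q (t - 1) A c"
proof -
  define g h where "g j = chi3 (j + t) * q ^ tri j * qbinom q (int A) (int c + j)"
    and "h j = chi3 (j + (t - 1)) * q ^ tri j * qbinom q (int A) (int c + j)" for j
  have "chi3 (j + t) * q ^ tri j * qbinom q (int (Suc A)) (int (Suc c) + j) = g j + q ^ Suc c * h (j + 1)" for j
  proof -
    have "q ^ tri j * q ^ nat (int c + 1 + j) * qbinom q (int A) (int c + 1 + j)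
        = q ^ Suc c * q ^ tri (j + 1) * qbinom q (int A) (int c + 1 + j)"
    proof (cases "qbinom q (int A) (int c + 1 + j) = 0")
      case False
      then have "tri j + nat (int c + 1 + j) = Suc c + tri (j + 1)"
        using qbinom_nonzero_imp_bounds of_nat_tri_plus_one[of j] by fastforce
      then show ?thesis
        by (simp flip: power_add)
    qed simp
    then show ?thesis
      using qbinom_pascal[OF assms, of "int A" "int c + 1 + j"]
      by (simp add: g_def h_def algebra_simps)
  qed
  then have "chi_sum q t (Suc A) (Suc c) = (\<Sum>\<^sub>\<infinity>j. g j + q ^ Suc c * h (j + 1))"
    by (simp add: chi_sum_def)
  also have "\<dots> = (\<Sum>\<^sub>\<infinity>j. g j) + q ^ Suc c * (\<Sum>\<^sub>\<infinity>j. h j)"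
    unfolding g_def h_def by (rule infsum_add_shifted finite_qbinom_support)+
  finally show ?thesis
    by (simp add: chi_sum_def g_def h_def)
qed

lemma chi_sum_pascal':
  assumes "norm q < 1" and "c \<le> A"
  shows "chi_sum q t (Suc A) c = chi_sum q t A c + q ^ (A - c) * chi_sum q (t + 1) A c"
proof -
  define g h where "g j = chi3 (j + t) * q ^ tri j * qbinom q (int A) (int c + j)"
    and "h j = chi3 (j + (t + 1)) * q ^ tri j * qbinom q (int A) (int c + j)" for j
  have "chi3 (j + t) * q ^ tri j * qbinom q (int (Suc A)) (int c + j) = g j + q ^ (A - c) * h (j - 1)" for j
  proof -
    have "q ^ tri j * q ^ nat (int A + 1 - (int c + j)) * qbinom q (int A) (int c + j - 1)
        = q ^ (A - c) * q ^ tri (j - 1) * qbinom q (int A) (int c + j - 1)"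
    proof (cases "qbinom q (int A) (int c + j - 1) = 0")
      case False
      then have "tri j + nat (int A + 1 - (int c + j)) = A - c + tri (j - 1)"
        using qbinom_nonzero_imp_bounds of_nat_tri_plus_one[of "j - 1"] assms(2) by fastforce
      then show ?thesis
        by (simp flip: power_add)
    qed simp
    then show ?thesis
      using qbinom_pascal'[OF assms(1), of "int A" "int c + j"]
      by (simp add: g_def h_def algebra_simps)
  qed
  then have "chi_sum q t (Suc A) c = (\<Sum>\<^sub>\<infinity>j. g j + q ^ (A - c) * h (j + - 1))"
    by (simp add: chi_sum_def)
  also have "\<dots> = (\<Sum>\<^sub>\<infinity>j. g j) + q ^ (A - c) * (\<Sum>\<^sub>\<infinity>j. h j)"
    unfolding g_def h_def by (rule infsum_add_shifted finite_qbinom_support)+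
  finally show ?thesis
    by (simp add: chi_sum_def g_def h_def)
qed

definition cube_quot :: "complex \<Rightarrow> nat \<Rightarrow> complex" where
  "cube_quot q m = (\<Prod>k<m. 1 - q ^ k + q ^ (2 * k))"

lemma cube_quot_Suc: "cube_quot q (Suc m) = cube_quot q m * (1 - q ^ m + q ^ (2 * m))"
  by (simp add: cube_quot_def)

lemma qpoch_cube_quot:
  assumes "norm q < 1"
  shows "qpoch (-1) (q ^ 3) m / qpoch (-1) q m = cube_quot q m"
proof -
  have "1 + q ^ (3 * k) = (1 + q ^ k) * (1 - q ^ k + q ^ (2 * k))" for k
    by (simp add: algebra_simps power_add[symmetric] numeral_3_eq_3 numeral_2_eq_2)
  then have "qpoch (-1) (q ^ 3) m = qpoch (-1) q m * cube_quot q m"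
    by (simp add: qpoch_def cube_quot_def prod.distrib[symmetric] power_mult)
  then show ?thesis
    using qpoch_minus_one_nonzero[OF assms] by simp
qed

definition chi_coeff :: "complex \<Rightarrow> int \<Rightarrow> nat \<Rightarrow> complex" where
  "chi_coeff q t m = (if t mod 3 = 0 then 1 - q ^ m else if t mod 3 = 1 then q ^ m else -1)"

lemma chi_coeff_Suc:
  "chi_coeff q t m + q ^ m * chi_coeff q (t + 1) m + q ^ Suc m * (chi_coeff q (t - 1) m + q ^ m * chi_coeff q t m)
     = chi_coeff q t (Suc m) * (1 - q ^ m + q ^ (2 * m))"
proof -
  consider "t mod 3 = 0" "(t + 1) mod 3 = 1" "(t - 1) mod 3 = 2"
    | "t mod 3 = 1" "(t + 1) mod 3 = 2" "(t - 1) mod 3 = 0"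
    | "t mod 3 = 2" "(t + 1) mod 3 = 0" "(t - 1) mod 3 = 1"
    by atomize_elim presburger
  moreover have "q ^ (2 * m) = q ^ m * q ^ m"
    by (simp add: mult_2 power_add)
  ultimately show ?thesis
    unfolding chi_coeff_def by cases (simp_all add: algebra_simps)
qed

lemma chi_sum_even:
  assumes "norm q < 1"
  shows "chi_sum q t (2 * m) m = chi_coeff q t m * cube_quot q m"
proof (induction m arbitrary: t)
  case 0
  have "chi_sum q t 0 0 = (\<Sum>\<^sub>\<infinity>j\<in>{0}. chi3 (j + t) * q ^ tri j * qbinom q 0 j)"
    unfolding chi_sum_def by (rule infsum_cong_neutral) (auto simp: qbinom_def)
  also have "\<dots> = chi3 t"
    using qfact_nonzero[OF assms] by (simp add: qbinom_def tri_def)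
  finally show ?case
    by (simp add: chi_coeff_def chi3_eq cube_quot_def)
next
  case (Suc m)
  have "chi_sum q t (2 * Suc m) (Suc m) = chi_sum q t (2 * m + 1) m + q ^ Suc m * chi_sum q (t - 1) (2 * m + 1) m"
    using chi_sum_pascal[OF assms, of t "2 * m + 1" m] by simp
  also have "\<dots> = cube_quot q m * (chi_coeff q t m + q ^ m * chi_coeff q (t + 1) m
      + q ^ Suc m * (chi_coeff q (t - 1) m + q ^ m * chi_coeff q t m))"
  proof -
    have "chi_sum q s (2 * m + 1) m = cube_quot q m * (chi_coeff q s m + q ^ m * chi_coeff q (s + 1) m)" for s
      using chi_sum_pascal'[OF assms, of m "2 * m" s] Suc.IH[of s] Suc.IH[of "s + 1"]
      by (simp add: algebra_simps)
    then show ?thesis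
      by (simp add: algebra_simps)
  qed
  also have "\<dots> = chi_coeff q t (Suc m) * cube_quot q (Suc m)"
    by (subst chi_coeff_Suc) (simp add: cube_quot_Suc ac_simps)
  finally show ?case .
qed

lemma chi_sum_seed:
  assumes "norm q < 1"
  shows "chi_sum q 1 (2 * m + 1) (m + 1) = q ^ m * (1 + q - q ^ (m + 1)) * cube_quot q m"
proof -
  have "chi_sum q 1 (2 * m + 1) (m + 1) = chi_sum q 1 (2 * m) m + q ^ Suc m * chi_sum q 0 (2 * m) m"
    using chi_sum_pascal[OF assms, of 1 "2 * m" m] by simp
  also have "\<dots> = q ^ m * cube_quot q m + q ^ Suc m * ((1 - q ^ m) * cube_quot q m)"
    by (simp add: chi_sum_even[OF assms] chi_coeff_def)
  finally show ?thesis
    by (simp add: algebra_simps)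
qed

section \<open>Bailey pairs\<close>

text \<open>Bailey pairs relative to \<open>a = q\<close>: the factor \<open>(aq;q)\<^bsub>K+r\<^esub>\<close> of the usual definition is \<open>qfact q (K + r + 1)\<close>.\<close>

definition bailey_pair :: "complex \<Rightarrow> (nat \<Rightarrow> complex) \<Rightarrow> (nat \<Rightarrow> complex) \<Rightarrow> bool" where
  "bailey_pair q \<alpha> \<beta> \<longleftrightarrow> (\<forall>K. \<beta> K = (\<Sum>r\<le>K. \<alpha> r / (qfact q (K - r) * qfact q (K + r + 1))))"

definition seed_alpha :: "complex \<Rightarrow> nat \<Rightarrow> complex" where
  "seed_alpha q r = chi3 (int r + 1) * q ^ tri (int r) + chi3 (- int r) * q ^ tri (- int r - 1)"

definition seed_beta :: "complex \<Rightarrow> nat \<Rightarrow> complex" where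
  "seed_beta q K = q ^ K * (1 + q - q ^ (K + 1)) * cube_quot q K / qfact q (2 * K + 1)"

lemma bailey_pair_seed:
  assumes "norm q < 1"
  shows "bailey_pair q (seed_alpha q) (seed_beta q)"
  unfolding bailey_pair_def
proof
  fix K
  have "(\<Sum>\<^sub>\<infinity>j. chi3 j * q ^ tri (j - 1) * qbinom q (2 * int K + 1) (int K + j))
      = chi_sum q 1 (2 * K + 1) (K + 1)"
    unfolding chi_sum_def
    by (rule infsum_reindex_bij_witness[of UNIV "\<lambda>j. j + 1" "\<lambda>j. j - 1"]) (auto simp: algebra_simps)
  also have "\<dots> = q ^ K * (1 + q - q ^ (K + 1)) * cube_quot q K"
    by (rule chi_sum_seed[OF assms])
  finally have "qfact q (2 * K + 1) * (\<Sum>r\<le>K. seed_alpha q r / (qfact q (K - r) * qfact q (K + r + 1)))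
      = q ^ K * (1 + q - q ^ (K + 1)) * cube_quot q K"
    using infsum_qbinom_fold[of "\<lambda>j. chi3 j * q ^ tri (j - 1)" q K] by (simp add: seed_alpha_def)
  then show "seed_beta q K = (\<Sum>r\<le>K. seed_alpha q r / (qfact q (K - r) * qfact q (K + r + 1)))"
    using qfact_nonzero[OF assms] by (simp add: seed_beta_def field_simps)
qed

lemma sum_triangle_swap:
  fixes g :: "nat \<Rightarrow> nat \<Rightarrow> 'a::comm_monoid_add"
  shows "(\<Sum>K\<le>M. \<Sum>r\<le>K. g r (K - r)) = (\<Sum>r\<le>M. \<Sum>k\<le>M - r. g r k)"
proof -
  have "(\<Sum>K\<le>M. \<Sum>r\<le>K. g r (K - r)) = (\<Sum>(r, k)\<in>{(i, j). i + j \<le> M}. g r k)"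
    by (rule sum.triangle_reindex_eq[symmetric])
  also have "{(i, j). i + j \<le> M} = (SIGMA r:{..M}. {..M - r})"
    by auto
  also have "(\<Sum>(r, k)\<in>(SIGMA r:{..M}. {..M - r}). g r k) = (\<Sum>r\<le>M. \<Sum>k\<le>M - r. g r k)"
    by (rule sum.Sigma[symmetric]) auto
  finally show ?thesis .
qed

text \<open>Bailey's lemma in the limit \<open>\<rho>\<^sub>1, \<rho>\<^sub>2 \<rightarrow> \<infinity>\<close>.\<close>

definition bailey_step :: "complex \<Rightarrow> (nat \<Rightarrow> complex) \<Rightarrow> nat \<Rightarrow> complex" where
  "bailey_step q \<beta> M = (\<Sum>K\<le>M. q ^ (K * (K + 1)) * \<beta> K / qfact q (M - K))"

lemma bailey_step_funpow_Suc:
  "(bailey_step q ^^ Suc v) \<beta> M = (\<Sum>K\<le>M. q ^ (K * (K + 1)) * (bailey_step q ^^ v) \<beta> K / qfact q (M - K))"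
  by (simp only: funpow.simps(2) comp_apply bailey_step_def[of q "(bailey_step q ^^ v) \<beta>"])

lemma bailey_lemma:
  assumes "norm q < 1" and "bailey_pair q \<alpha> \<beta>"
  shows "bailey_pair q (\<lambda>r. q ^ (r * (r + 1)) * \<alpha> r) (bailey_step q \<beta>)"
  unfolding bailey_pair_def
proof
  fix M
  \<comment> \<open>the summand of \<open>\<beta>' M\<close> with \<open>K = r + k\<close>\<close>
  define g where "g r k = q ^ ((r + k) * (r + k + 1)) * \<alpha> r
      / (qfact q k * qfact q (M - r - k) * qfact q (k + (2 * r + 1)))" for r k
  have "bailey_step q \<beta> M = (\<Sum>K\<le>M. \<Sum>r\<le>K. g r (K - r))"
    using assms(2)
    by (auto simp: bailey_step_def bailey_pair_def g_def sum_distrib_left sum_divide_distrib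
        field_simps intro!: sum.cong)
  also have "\<dots> = (\<Sum>r\<le>M. \<Sum>k\<le>M - r. g r k)"
    by (rule sum_triangle_swap)
  also have "\<dots> = (\<Sum>r\<le>M. q ^ (r * (r + 1)) * \<alpha> r / (qfact q (M - r) * qfact q (M + r + 1)))"
  proof (rule sum.cong[OF refl])
    fix r
    assume "r \<in> {..M}"
    have "(r + k) * (r + k + 1) = r * (r + 1) + k * (k + (2 * r + 1))" for k
      by (simp add: algebra_simps)
    then have "(\<Sum>k\<le>M - r. g r k) = q ^ (r * (r + 1)) * \<alpha> r
        * (\<Sum>k\<le>M - r. q ^ (k * (k + (2 * r + 1))) / (qfact q k * qfact q (M - r - k) * qfact q (k + (2 * r + 1))))"
      by (simp add: g_def sum_distrib_left power_add mult_ac)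
    also have "\<dots> = q ^ (r * (r + 1)) * \<alpha> r / (qfact q (M - r) * qfact q (M - r + (2 * r + 1)))"
      by (simp only: sum_power_div_three_qfacts[OF assms(1)]) simp
    also have "M - r + (2 * r + 1) = M + r + 1"
      using \<open>r \<in> {..M}\<close> by simp
    finally show "(\<Sum>k\<le>M - r. g r k) = q ^ (r * (r + 1)) * \<alpha> r / (qfact q (M - r) * qfact q (M + r + 1))" .
  qed
  finally show "bailey_step q \<beta> M = (\<Sum>r\<le>M. q ^ (r * (r + 1)) * \<alpha> r / (qfact q (M - r) * qfact q (M + r + 1)))" .
qed

lemma bailey_pair_iterate:
  assumes "norm q < 1" and "bailey_pair q \<alpha> \<beta>"
  shows "bailey_pair q (\<lambda>r. q ^ (v * (r * (r + 1))) * \<alpha> r) ((bailey_step q ^^ v) \<beta>)"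
proof (induction v)
  case 0
  show ?case
    using assms(2) by simp
next
  case (Suc v)
  then show ?case
    using bailey_lemma[OF assms(1) Suc.IH] by (simp add: power_add mult.assoc)
qed

section \<open>The multisum\<close>

definition weak_compositions :: "nat \<Rightarrow> nat \<Rightarrow> (nat \<Rightarrow> nat) set" where
  "weak_compositions v M = {n. (\<forall>i. i \<notin> {1..v} \<longrightarrow> n i = 0) \<and> (\<Sum>k=1..v. n k) = M}"

definition prepend :: "nat \<Rightarrow> (nat \<Rightarrow> nat) \<Rightarrow> nat \<Rightarrow> nat" where
  "prepend a m i = (if i = 0 then 0 else if i = 1 then a else m (i - 1))"

lemma prepend_Suc: "1 \<le> i \<Longrightarrow> prepend a m (Suc i) = m i"
  by (simp add: prepend_def)

lemma sum_prepend_shift: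
  assumes "1 \<le> i"
  shows "(\<Sum>k=Suc i..Suc v. prepend a m k) = (\<Sum>k=i..v. m k)"
proof -
  have "(\<Sum>k=Suc i..Suc v. prepend a m k) = (\<Sum>k=i..v. prepend a m (Suc k))"
    by (rule sum.shift_bounds_cl_Suc_ivl)
  also have "\<dots> = (\<Sum>k=i..v. m k)"
    using assms by (intro sum.cong) (auto simp: prepend_Suc)
  finally show ?thesis .
qed

lemma sum_prepend: "(\<Sum>k=1..Suc v. prepend a m k) = a + (\<Sum>k=1..v. m k)"
proof -
  have "(\<Sum>k=1..Suc v. prepend a m k) = prepend a m 1 + (\<Sum>k=Suc 1..Suc v. prepend a m k)"
    by (rule sum.atLeast_Suc_atMost) simp
  then show ?thesis
    by (simp only: sum_prepend_shift order_refl) (simp add: prepend_def)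
qed

lemma weak_compositions_Suc:
  "weak_compositions (Suc v) M = (\<lambda>(a, m). prepend a m) ` (SIGMA a:{..M}. weak_compositions v (M - a))"
proof (intro equalityI subsetI)
  fix n
  assume n: "n \<in> weak_compositions (Suc v) M"
  define m where "m i = (if i = 0 then 0 else n (Suc i))" for i
  have "n = prepend (n 1) m"
    using n by (auto simp: fun_eq_iff prepend_def m_def weak_compositions_def split: nat.split)
  moreover have "n 1 + (\<Sum>k=1..v. m k) = M"
    using n sum_prepend[where v = v and a = "n 1" and m = m] \<open>n = prepend (n 1) m\<close> by (simp add: weak_compositions_def)
  then have "n 1 \<le> M" and "m \<in> weak_compositions v (M - n 1)"
    using n by (auto simp: weak_compositions_def m_def)
  ultimately show "n \<in> (\<lambda>(a, m). prepend a m) ` (SIGMA a:{..M}. weak_compositions v (M - a))"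
    by force
next
  fix n
  assume "n \<in> (\<lambda>(a, m). prepend a m) ` (SIGMA a:{..M}. weak_compositions v (M - a))"
  then obtain a m where n: "n = prepend a m" and "a \<le> M" and m: "m \<in> weak_compositions v (M - a)"
    by auto
  then have "(\<Sum>k=1..Suc v. n k) = M"
    unfolding n sum_prepend by (simp add: weak_compositions_def)
  moreover have "n i = 0" if "i \<notin> {1..Suc v}" for i
    using m that unfolding n weak_compositions_def prepend_def by (auto dest: spec[of _ "i - 1"])
  ultimately show "n \<in> weak_compositions (Suc v) M"
    unfolding weak_compositions_def by blast
qed

lemma inj_on_prepend: "inj_on (\<lambda>(a, m). prepend a m) (SIGMA a:A. weak_compositions v (f a))"
proof (rule inj_onI, clarify)
  fix a m a' m'
  assume "m \<in> weak_compositions v (f a)" "m' \<in> weak_compositions v (f a')"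
    and eq: "prepend a m = prepend a' m'"
  then have "m 0 = 0" "m' 0 = 0"
    by (auto simp: weak_compositions_def)
  moreover have "m (Suc i) = m' (Suc i)" for i
    using fun_cong[OF eq, of "Suc (Suc i)"] by (simp add: prepend_def)
  ultimately have "m = m'"
    by (metis not0_implies_Suc ext)
  moreover have "a = a'"
    using fun_cong[OF eq, of 1] by (simp add: prepend_def)
  ultimately show "a = a' \<and> m = m'"
    by simp
qed

lemma finite_weak_compositions: "finite (weak_compositions v M)"
proof (induction v arbitrary: M)
  case 0
  have "weak_compositions 0 M \<subseteq> {\<lambda>_. 0}"
    by (auto simp: weak_compositions_def)
  then show ?case
    by (rule finite_subset) simp
next
  case (Suc v)
  then show ?case
    by (simp add: weak_compositions_Suc)
qed

lemma sum_weak_compositions_Suc: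
  "(\<Sum>n\<in>weak_compositions (Suc v) M. f n) = (\<Sum>a\<le>M. \<Sum>m\<in>weak_compositions v (M - a). f (prepend a m))"
proof -
  have "(\<Sum>n\<in>weak_compositions (Suc v) M. f n)
      = sum (f \<circ> (\<lambda>(a, m). prepend a m)) (SIGMA a:{..M}. weak_compositions v (M - a))"
    unfolding weak_compositions_Suc by (rule sum.reindex[OF inj_on_prepend])
  then show ?thesis
    by (simp add: sum.Sigma finite_weak_compositions comp_def prod.case_distrib)
qed

lemma weak_compositions_1: "weak_compositions (Suc 0) M = {\<lambda>i. if i = 1 then M else 0}"
  by (auto simp: weak_compositions_def fun_eq_iff)

text \<open>The summand of the theorem without the factor \<open>(q)\<^bsub>2L+1\<^esub> / (q)\<^bsub>L-N\<^sub>1\<^esub>\<close>; its factors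
  depending on \<open>n\<^sub>v\<close> alone make up \<open>seed_beta q (n v)\<close>.\<close>

definition multisum_term :: "complex \<Rightarrow> nat \<Rightarrow> (nat \<Rightarrow> nat) \<Rightarrow> complex" where
  "multisum_term q v n = (let N = (\<lambda>i. \<Sum>k=i..v. n k) in
     q ^ (\<Sum>i=1..v. N i * (N i + 1)) / (\<Prod>i=1..v-1. qfact q (n i)) * seed_beta q (n v))"

lemma sum_tail_sums_prepend:
  "(\<Sum>i=1..Suc v. h (\<Sum>k=i..Suc v. prepend a m k)) = h (a + (\<Sum>k=1..v. m k)) + (\<Sum>i=1..v. h (\<Sum>k=i..v. m k))"
proof -
  have "(\<Sum>i=1..Suc v. h (\<Sum>k=i..Suc v. prepend a m k))
      = h (\<Sum>k=1..Suc v. prepend a m k) + (\<Sum>i=Suc 1..Suc v. h (\<Sum>k=i..Suc v. prepend a m k))"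
    by (rule sum.atLeast_Suc_atMost) simp
  also have "(\<Sum>i=Suc 1..Suc v. h (\<Sum>k=i..Suc v. prepend a m k)) = (\<Sum>i=1..v. h (\<Sum>k=Suc i..Suc v. prepend a m k))"
    by (rule sum.shift_bounds_cl_Suc_ivl)
  also have "\<dots> = (\<Sum>i=1..v. h (\<Sum>k=i..v. m k))"
  proof (rule sum.cong[OF refl])
    fix i
    assume "i \<in> {1..v}"
    then show "h (\<Sum>k=Suc i..Suc v. prepend a m k) = h (\<Sum>k=i..v. m k)"
      by (simp only: sum_prepend_shift atLeastAtMost_iff)
  qed
  finally show ?thesis
    by (simp only: sum_prepend)
qed

lemma prod_prepend:
  assumes "1 \<le> v"
  shows "(\<Prod>i=1..v. g (prepend a m i)) = g a * (\<Prod>i=1..v - 1. g (m i))"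
proof -
  obtain u where u: "v = Suc u"
    using assms by (cases v) auto
  have "(\<Prod>i=1..Suc u. g (prepend a m i)) = g (prepend a m 1) * (\<Prod>i=Suc 1..Suc u. g (prepend a m i))"
    by (rule prod.atLeast_Suc_atMost) simp
  also have "(\<Prod>i=Suc 1..Suc u. g (prepend a m i)) = (\<Prod>i=1..u. g (prepend a m (Suc i)))"
    by (rule prod.shift_bounds_cl_Suc_ivl)
  also have "\<dots> = (\<Prod>i=1..u. g (m i))"
    by (rule prod.cong) (simp_all add: prepend_Suc)
  finally show ?thesis
    by (simp add: u prepend_def)
qed

lemma multisum_term_prepend:
  assumes "1 \<le> v"
  shows "multisum_term q (Suc v) (prepend a m)
       = q ^ ((a + (\<Sum>k=1..v. m k)) * (a + (\<Sum>k=1..v. m k) + 1)) / qfact q a * multisum_term q v m"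
proof -
  have "prepend a m (Suc v) = m v"
    using assms by (rule prepend_Suc)
  then have "multisum_term q (Suc v) (prepend a m)
      = q ^ ((a + (\<Sum>k=1..v. m k)) * (a + (\<Sum>k=1..v. m k) + 1) + (\<Sum>i=1..v. (\<Sum>k=i..v. m k) * ((\<Sum>k=i..v. m k) + 1)))
        / (qfact q a * (\<Prod>i=1..v - 1. qfact q (m i))) * seed_beta q (m v)"
    by (simp only: multisum_term_def Let_def diff_Suc_1 prod_prepend[OF assms]
        sum_tail_sums_prepend[where h = "\<lambda>x. x * (x + 1)"])
  also have "\<dots> = q ^ ((a + (\<Sum>k=1..v. m k)) * (a + (\<Sum>k=1..v. m k) + 1)) / qfact q a * multisum_term q v m"
    by (simp add: multisum_term_def Let_def power_add)
  finally show ?thesis .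
qed

lemma sum_multisum_term:
  assumes "norm q < 1"
  shows "(\<Sum>n\<in>weak_compositions (Suc w) M. multisum_term q (Suc w) n)
       = q ^ (M * (M + 1)) * (bailey_step q ^^ w) (seed_beta q) M"
proof (induction w arbitrary: M)
  case 0
  show ?case
    by (simp add: weak_compositions_1 multisum_term_def)
next
  case (Suc w)
  have "(\<Sum>n\<in>weak_compositions (Suc (Suc w)) M. multisum_term q (Suc (Suc w)) n)
      = (\<Sum>a\<le>M. \<Sum>m\<in>weak_compositions (Suc w) (M - a). multisum_term q (Suc (Suc w)) (prepend a m))"
    by (rule sum_weak_compositions_Suc)
  also have "\<dots> = (\<Sum>a\<le>M. q ^ (M * (M + 1)) / qfact q a
      * (\<Sum>m\<in>weak_compositions (Suc w) (M - a). multisum_term q (Suc w) m))"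
  proof (rule sum.cong[OF refl])
    fix a
    assume "a \<in> {..M}"
    have "multisum_term q (Suc (Suc w)) (prepend a m) = q ^ (M * (M + 1)) / qfact q a * multisum_term q (Suc w) m"
      if "m \<in> weak_compositions (Suc w) (M - a)" for m
    proof -
      have "a + (\<Sum>k=1..Suc w. m k) = M"
        using that \<open>a \<in> {..M}\<close> by (simp add: weak_compositions_def)
      then show ?thesis
        using multisum_term_prepend[of "Suc w" q a m] by simp
    qed
    then show "(\<Sum>m\<in>weak_compositions (Suc w) (M - a). multisum_term q (Suc (Suc w)) (prepend a m))
        = q ^ (M * (M + 1)) / qfact q a * (\<Sum>m\<in>weak_compositions (Suc w) (M - a). multisum_term q (Suc w) m)"
      by (simp add: sum_distrib_left)
  qed
  also have "\<dots> = (\<Sum>a\<le>M. q ^ (M * (M + 1)) * (q ^ ((M - a) * (M - a + 1)) * (bailey_step q ^^ w) (seed_beta q) (M - a)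
      / qfact q (M - (M - a))))"
    by (auto simp: Suc.IH intro!: sum.cong)
  also have "\<dots> = q ^ (M * (M + 1)) * (\<Sum>K\<le>M. q ^ (K * (K + 1)) * (bailey_step q ^^ w) (seed_beta q) K / qfact q (M - K))"
    unfolding sum_distrib_left
    by (rule sum.reindex_bij_witness[of _ "\<lambda>K. M - K" "\<lambda>K. M - K"]) auto
  also have "\<dots> = q ^ (M * (M + 1)) * (bailey_step q ^^ Suc w) (seed_beta q) M"
    by (simp only: bailey_step_funpow_Suc)
  finally show ?case .
qed

lemma infsum_inv_qfact_weak_compositions:
  "(\<Sum>\<^sub>\<infinity>n\<in>{n :: nat \<Rightarrow> nat. \<forall>i. i \<notin> {1..v} \<longrightarrow> n i = 0}. f n * inv_qfact q (int L - int (\<Sum>k=1..v. n k)))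
     = (\<Sum>M\<le>L. (\<Sum>n\<in>weak_compositions v M. f n) / qfact q (L - M))"
proof -
  let ?g = "\<lambda>n. f n * inv_qfact q (int L - int (\<Sum>k=1..v. n k))"
  have "(\<Sum>\<^sub>\<infinity>n\<in>{n. \<forall>i. i \<notin> {1..v} \<longrightarrow> n i = 0}. ?g n) = (\<Sum>\<^sub>\<infinity>n\<in>(\<Union>M\<le>L. weak_compositions v M). ?g n)"
    by (rule infsum_cong_neutral) (auto simp: weak_compositions_def inv_qfact_def simp del: of_nat_sum)
  also have "\<dots> = (\<Sum>n\<in>(\<Union>M\<le>L. weak_compositions v M). ?g n)"
    by (simp add: finite_weak_compositions)
  also have "\<dots> = (\<Sum>M\<le>L. \<Sum>n\<in>weak_compositions v M. ?g n)"
    using finite_weak_compositions by (intro sum.UNION_disjoint) (auto simp: weak_compositions_def)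
  also have "\<dots> = (\<Sum>M\<le>L. (\<Sum>n\<in>weak_compositions v M. f n) / qfact q (L - M))"
    by (auto simp: weak_compositions_def inv_qfact_def sum_divide_distrib nat_diff_distrib intro!: sum.cong)
  finally show ?thesis .
qed

lemma legendre_qbinom_sum_eq_bailey:
  "(\<Sum>\<^sub>\<infinity> j :: int. of_int (Legendre j 3)
       * q powi (((2 * int v + 1) * j^2 - (2 * int v + 3) * j) div 2 + 1)
       * qbinom q (2 * int L + 1) (int L + j))
   = qfact q (2 * L + 1) * (\<Sum>r\<le>L. q ^ (v * (r * (r + 1))) * seed_alpha q r / (qfact q (L - r) * qfact q (L + r + 1)))"
proof -
  have exponent: "((2 * int v + 1) * j^2 - (2 * int v + 3) * j) div 2 + 1 = int (v * nat (j * (j - 1)) + tri (j - 1))" for j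
  proof -
    have "(2 * int v + 1) * j^2 - (2 * int v + 3) * j = 2 * (int v * (j * (j - 1)) - 1) + (j - 1) * (j - 1 - 1)"
      by (simp add: algebra_simps power2_eq_square)
    moreover have "0 \<le> j * (j - 1)"
      by (cases "j \<ge> 1") (auto simp: zero_le_mult_iff)
    ultimately show ?thesis
      by (simp add: of_nat_tri)
  qed
  define G where "G j = chi3 j * q ^ (v * nat (j * (j - 1)) + tri (j - 1))" for j
  have alpha: "G (int r + 1) + G (- int r) = q ^ (v * (r * (r + 1))) * seed_alpha q r" for r
  proof -
    have arguments: "int r + 1 - 1 = int r" "(int r + 1) * int r = int (r * (r + 1))"
      "- int r * (- int r - 1) = int (r * (r + 1))"
      by (simp_all add: algebra_simps)
    show ?thesis
      unfolding G_def arguments nat_int by (simp add: seed_alpha_def power_add algebra_simps)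
  qed
  have "(\<Sum>\<^sub>\<infinity> j :: int. of_int (Legendre j 3)
       * q powi (((2 * int v + 1) * j^2 - (2 * int v + 3) * j) div 2 + 1)
       * qbinom q (2 * int L + 1) (int L + j))
     = (\<Sum>\<^sub>\<infinity> j. G j * qbinom q (2 * int L + 1) (int L + j))"
    by (simp only: exponent power_int_of_nat chi3_def G_def)
  also have "\<dots> = qfact q (2 * L + 1) * (\<Sum>r\<le>L. (G (int r + 1) + G (- int r)) / (qfact q (L - r) * qfact q (L + r + 1)))"
    by (rule infsum_qbinom_fold)
  finally show ?thesis
    by (simp only: alpha)
qed

lemma infsum_multisum_term_eq_bailey_step:
  assumes "norm q < 1"
  shows "(\<Sum>\<^sub>\<infinity>n\<in>{n. \<forall>i. i \<notin> {1..Suc w} \<longrightarrow> n i = 0}.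
            multisum_term q (Suc w) n * inv_qfact q (int L - int (\<Sum>k=1..Suc w. n k)))
       = (bailey_step q ^^ Suc w) (seed_beta q) L"
proof -
  have "(\<Sum>\<^sub>\<infinity>n\<in>{n. \<forall>i. i \<notin> {1..Suc w} \<longrightarrow> n i = 0}.
          multisum_term q (Suc w) n * inv_qfact q (int L - int (\<Sum>k=1..Suc w. n k)))
      = (\<Sum>M\<le>L. (\<Sum>n\<in>weak_compositions (Suc w) M. multisum_term q (Suc w) n) / qfact q (L - M))"
    by (rule infsum_inv_qfact_weak_compositions)
  also have "\<dots> = (bailey_step q ^^ Suc w) (seed_beta q) L"
    by (simp only: sum_multisum_term[OF assms] bailey_step_funpow_Suc)
  finally show ?thesis .
qed

lemma summand_eq_multisum_term:
  assumes "norm q < 1"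
  shows "(let N = (\<lambda>i. \<Sum>k=i..v. n k) in
            q ^ ((\<Sum>i=1..v. N i * (N i + 1)) + n v)
            / ((\<Prod>i=1..v-1. qfact q (n i)) * qfact q (1 + 2 * n v))
            * (qpoch (-1) (q ^ 3) (n v) / qpoch (-1) q (n v))
            * (qfact q (2 * L + 1) * inv_qfact q (int L - int (N 1)))
            * (1 + q - q ^ (1 + n v)))
       = qfact q (2 * L + 1) * (multisum_term q v n * inv_qfact q (int L - int (\<Sum>k=1..v. n k)))"
  by (simp add: multisum_term_def seed_beta_def qpoch_cube_quot[OF assms] Let_def power_add ac_simps)

theorem mainTheorem9:
  fixes v L :: nat and q :: complex
  assumes "v \<ge> 1" and "norm q < 1"
  shows "(\<Sum>\<^sub>\<infinity> n \<in> {n :: nat \<Rightarrow> nat. \<forall>i. i \<notin> {1..v} \<longrightarrow> n i = 0}.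
            (let N = (\<lambda>i. \<Sum>k=i..v. n k) in
              q ^ ((\<Sum>i=1..v. N i * (N i + 1)) + n v)
              / ((\<Prod>i=1..v-1. qfact q (n i)) * qfact q (1 + 2 * n v))
              * (qpoch (-1) (q ^ 3) (n v) / qpoch (-1) q (n v))
              * (qfact q (2 * L + 1) * inv_qfact q (int L - int (N 1)))
              * (1 + q - q ^ (1 + n v))))
       = (\<Sum>\<^sub>\<infinity> j :: int.
            of_int (Legendre j 3)
            * q powi (((2 * int v + 1) * j^2 - (2 * int v + 3) * j) div 2 + 1)
            * qbinom q (2 * int L + 1) (int L + j))"
proof -
  obtain w where v: "v = Suc w"
    using assms(1) by (cases v) auto
  have "(\<Sum>\<^sub>\<infinity>n\<in>{n. \<forall>i. i \<notin> {1..v} \<longrightarrow> n i = 0}.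
          qfact q (2 * L + 1) * (multisum_term q v n * inv_qfact q (int L - int (\<Sum>k=1..v. n k))))
      = qfact q (2 * L + 1) * (bailey_step q ^^ v) (seed_beta q) L"
    using infsum_multisum_term_eq_bailey_step[OF assms(2), of w L] by (simp only: v infsum_cmult_right')
  also have "\<dots> = qfact q (2 * L + 1)
      * (\<Sum>r\<le>L. q ^ (v * (r * (r + 1))) * seed_alpha q r / (qfact q (L - r) * qfact q (L + r + 1)))"
    using bailey_pair_iterate[OF assms(2) bailey_pair_seed[OF assms(2)], of v]
    by (simp add: bailey_pair_def)
  finally show ?thesis
    by (simp only: summand_eq_multisum_term[OF assms(2)] legendre_qbinom_sum_eq_bailey)
qed

end
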